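(* Let $\phi$ be a Drinfeld $A[\underline{t}_s]$-module over $\mathbb{T}_s$ with $\phi_\theta=\theta+A_1\tau+\dots+A_r\tau^r$, $A_r\in\mathbb{T}_s^\times$, let $\lambda\in\Lambda_\phi$, and let $f_\lambda(z)=\sum_{n\ge0}\exp_\phi(\lambda/\theta^{n+1})z^n$ be its Anderson generating function. Then: (a) $F_{\delta^0}(\lambda)=\operatorname{Res}_{z=\theta}f_\lambda(z)=-\lambda$; (b) for every $1\le j\le r-1$, \[ F_{\delta^j}(\lambda)=\sum_{n\ge0}\exp_\phi\Big(\frac{\lambda}{\theta^{n+1}}\Big)^{(j)}\theta^n=f_\lambda^{(j)}(z)\big|_{z=\theta}. \]
   Context: $\mathbb{F}_q$ finite field, $\theta,t_1,\dots,t_s,z$ independent variables, $A[\underline{t}_s]=\mathbb{F}_q[\theta,t_1,\dots,t_s]$, $\mathbb{F}_q[\underline{t}_s]=\mathbb{F}_q[t_1,\dots,t_s]$. $\mathbb{C}_\infty$: completion of an algebraic closure of $\mathbb{F}_q((1/\theta))$, $|\theta|_\infty=q$. $\mathbb{T}_s$: Tate algebra of power series in $t_1,\dots,t_s$ over $\mathbb{C}_\infty$ with coefficients tending to $0$, Gauss norm $\|\cdot\|_\infty$. $\tau$ raises $\mathbb{C}_\infty$-coefficients to the $q$-th power, $f^{(n)}=\tau^n(f)$, applied coefficientwise to power series in $z$ (fixing $z$). $\mathbb{T}_s[\tau]$, $\mathbb{T}_s[[\tau]]$: twisted rings with $\tau f=f^{(1)}\tau$, acting by $\sum a_i\tau^i(f)=\sum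 a_if^{(i)}$. A Drinfeld $A[\underline{t}_s]$-module is an $\mathbb{F}_q[\underline{t}_s]$-algebra homomorphism $\phi:A[\underline{t}_s]\to\mathbb{T}_s[\tau]$ with $\phi_\theta=\theta+A_1\tau+\dots+A_r\tau^r$. $\exp_\phi=\sum\alpha_i\tau^i$: unique series with $\alpha_0=1$, $\exp_\phi a=\phi_a\exp_\phi$; it converges on $\mathbb{T}_s$; $\Lambda_\phi=\ker\exp_\phi$. One has $f_\lambda(z)=\sum_{n\ge0}\alpha_n\lambda^{(n)}/(\theta^{q^n}-z)$, a function of $z$ with simple poles at $z=\theta^{q^n}$, and $\operatorname{Res}_{z=\theta}f_\lambda$ denotes its residue at $z=\theta$; for $j\ge1$, $f_\lambda^{(j)}$ converges for $|z|_\infty\le|\theta|_\infty$ so can be evaluated at $z=\theta$. A biderivation is an $\mathbb{F}_q[\underline{t}_s]$-linear map $\eta:A[\underline{t}_s]\to\tau\mathbb{T}_s[\tau]$ with $\eta_{ab}=a\eta_b+\eta_a\phi_b$; it is determined by $\eta_\theta$. $\delta^0$ is the biderivation $\delta^0_a=\phi_a-a$, and for $1\le j\le r-1$, $\delta^j$ is the biderivation with $\delta^j_\theta=\tau^j$. For a biderivation $\eta$, $F_\eta$ is the unique element of $\tau\mathbb{T}_s[[\tau]]$ with $F_\eta\theta-\theta F_\eta=\eta_\theta\exp_\phi$; it converges on every element of $\mathbb{T}_s$. *)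

theory Defs
  imports Complex_Main "HOL-Computational_Algebra.Polynomial"
begin

text \<open>A field 'c with a real-valued absolute value v is (isometrically isomorphic to)
the completion of an algebraic closure of F_q((1/theta)) with |theta| = q, iff:
v is a non-archimedean absolute value, 'c has characteristic p where q is a power of p,
'c is complete and algebraically closed, v theta = q, and the elements algebraic over
F_q(theta) are dense.\<close>

definition Fq :: "nat \<Rightarrow> 'c::field set" where
  "Fq q = {x. x ^ q = x}"

definition Fq_theta_poly :: "nat \<Rightarrow> 'c::field \<Rightarrow> 'c set" where
  "Fq_theta_poly q \<theta> = {poly Q \<theta> | Q. \<forall>i. coeff Q i \<in> Fq q}"

definition is_Cinf :: "nat \<Rightarrow> ('c::field \<Rightarrow> real) \<Rightarrow> 'c \<Rightarrow> bool" where
  "is_Cinf q v \<theta> \<longleftrightarrow>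
     (\<exists>p e. prime p \<and> e > 0 \<and> q = p ^ e \<and> of_nat p = (0::'c)) \<and>
     (\<forall>x. v x \<ge> 0 \<and> (v x = 0 \<longleftrightarrow> x = 0)) \<and>
     (\<forall>x y. v (x * y) = v x * v y) \<and>
     (\<forall>x y. v (x + y) \<le> max (v x) (v y)) \<and>
     (\<forall>X::nat \<Rightarrow> 'c. (\<forall>\<epsilon>>0. \<exists>N. \<forall>m\<ge>N. \<forall>n\<ge>N. v (X m - X n) < \<epsilon>)
         \<longrightarrow> (\<exists>L. \<forall>\<epsilon>>0. \<exists>N. \<forall>n\<ge>N. v (X n - L) < \<epsilon>)) \<and>
     (\<forall>P::'c poly. degree P > 0 \<longrightarrow> (\<exists>x. poly P x = 0)) \<and>
     v \<theta> = real q \<and>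
     (\<forall>x. \<forall>\<epsilon>>0. \<exists>y. v (x - y) < \<epsilon> \<and>
         (\<exists>P::'c poly. P \<noteq> 0 \<and> (\<forall>i. coeff P i \<in> Fq_theta_poly q \<theta>) \<and> poly P y = 0))"

text \<open>An element of T_s is represented by its coefficient function on exponent vectors
e :: nat \<Rightarrow> nat (e i = exponent of t_(i+1)); elements of T_s vanish on exponent vectors
involving variables t_i with i > s, and their coefficients tend to 0.\<close>

type_synonym 'c tate = "(nat \<Rightarrow> nat) \<Rightarrow> 'c"

definition in_tate :: "nat \<Rightarrow> ('c::field \<Rightarrow> real) \<Rightarrow> 'c tate \<Rightarrow> bool" where
  "in_tate s v f \<longleftrightarrow> (\<forall>e. (\<exists>i\<ge>s. e i \<noteq> 0) \<longrightarrow> f e = 0) \<and>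
                    (\<forall>\<epsilon>>0. finite {e. v (f e) \<ge> \<epsilon>})"

definition tzero :: "'c::field tate" where "tzero = (\<lambda>e. 0)"
definition tconst :: "'c::field \<Rightarrow> 'c tate" where
  "tconst c = (\<lambda>e. if (\<forall>i. e i = 0) then c else 0)"
definition tone :: "'c::field tate" where "tone = tconst 1"
definition tadd :: "'c::field tate \<Rightarrow> 'c tate \<Rightarrow> 'c tate" where
  "tadd f g = (\<lambda>e. f e + g e)"
definition tneg :: "'c::field tate \<Rightarrow> 'c tate" where
  "tneg f = (\<lambda>e. - f e)"
definition tscale :: "'c::field \<Rightarrow> 'c tate \<Rightarrow> 'c tate" where
  "tscale c f = (\<lambda>e. c * f e)"
definition tmul :: "'c::field tate \<Rightarrow> 'c tate \<Rightarrow> 'c tate" where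
  "tmul f g = (\<lambda>e. \<Sum>a\<in>{a. \<forall>i. a i \<le> e i}. f a * g (\<lambda>i. e i - a i))"
definition tsum_fin :: "('a \<Rightarrow> 'c::field tate) \<Rightarrow> 'a set \<Rightarrow> 'c tate" where
  "tsum_fin F K = (\<lambda>e. \<Sum>k\<in>K. F k e)"

text \<open>tau^n: raise the C_infinity-coefficients to the power q^n.\<close>
definition tfrobn :: "nat \<Rightarrow> nat \<Rightarrow> 'c::field tate \<Rightarrow> 'c tate" where
  "tfrobn q n f = (\<lambda>e. (f e) ^ (q ^ n))"

text \<open>Convergence for the Gauss norm (sup of the absolute values of coefficients).\<close>
definition tate_tendsto :: "('c::field \<Rightarrow> real) \<Rightarrow> (nat \<Rightarrow> 'c tate) \<Rightarrow> 'c tate \<Rightarrow> bool" where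
  "tate_tendsto v X L \<longleftrightarrow> (\<forall>\<epsilon>>0. \<exists>N. \<forall>n\<ge>N. \<forall>e. v (X n e - L e) < \<epsilon>)"

definition tate_sums :: "('c::field \<Rightarrow> real) \<Rightarrow> (nat \<Rightarrow> 'c tate) \<Rightarrow> 'c tate \<Rightarrow> bool" where
  "tate_sums v g S \<longleftrightarrow> tate_tendsto v (\<lambda>N. tsum_fin g {..<N}) S"

text \<open>Action of a twisted series sum c_i tau^i on f: sum c_i f^(i).\<close>
definition tau_apply :: "('c::field \<Rightarrow> real) \<Rightarrow> nat \<Rightarrow> (nat \<Rightarrow> 'c tate) \<Rightarrow> 'c tate \<Rightarrow> 'c tate" where
  "tau_apply v q c f = (THE S. tate_sums v (\<lambda>i. tmul (c i) (tfrobn q i f)) S)"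

text \<open>phi_theta = theta + A 1 tau + ... + A r tau^r.  The exponential exp_phi = sum alpha_i tau^i
is the unique series with alpha_0 = 1 and exp_phi theta = phi_theta exp_phi (which, phi being
an F_q[t_s]-algebra homomorphism, is equivalent to exp_phi a = phi_a exp_phi for all a);
the condition below is this identity compared coefficientwise.\<close>
definition exp_rel :: "nat \<Rightarrow> 'c::field \<Rightarrow> nat \<Rightarrow> (nat \<Rightarrow> 'c tate) \<Rightarrow> (nat \<Rightarrow> 'c tate) \<Rightarrow> bool" where
  "exp_rel q \<theta> r A \<alpha> \<longleftrightarrow> \<alpha> 0 = tone \<and>
     (\<forall>i. tscale (\<theta> ^ (q ^ i)) (\<alpha> i) =
          tadd (tscale \<theta> (\<alpha> i))
               (tsum_fin (\<lambda>k. tmul (A k) (tfrobn q k (\<alpha> (i - k)))) {k. 1 \<le> k \<and> k \<le> r \<and> k \<le> i}))"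

definition exp_coeffs :: "nat \<Rightarrow> 'c::field \<Rightarrow> nat \<Rightarrow> (nat \<Rightarrow> 'c tate) \<Rightarrow> nat \<Rightarrow> 'c tate" where
  "exp_coeffs q \<theta> r A = (THE \<alpha>. exp_rel q \<theta> r A \<alpha>)"

definition exp_apply :: "('c::field \<Rightarrow> real) \<Rightarrow> nat \<Rightarrow> 'c \<Rightarrow> nat \<Rightarrow> (nat \<Rightarrow> 'c tate) \<Rightarrow> 'c tate \<Rightarrow> 'c tate" where
  "exp_apply v q \<theta> r A f = tau_apply v q (exp_coeffs q \<theta> r A) f"

definition period_lattice :: "nat \<Rightarrow> ('c::field \<Rightarrow> real) \<Rightarrow> nat \<Rightarrow> 'c \<Rightarrow> nat \<Rightarrow> (nat \<Rightarrow> 'c tate) \<Rightarrow> 'c tate set" where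
  "period_lattice s v q \<theta> r A = {l. in_tate s v l \<and>
       tate_sums v (\<lambda>i. tmul (exp_coeffs q \<theta> r A i) (tfrobn q i l)) tzero}"

text \<open>A biderivation eta is determined by eta_theta = sum_{k>=1} eta_k tau^k (given by its
coefficient function with eta_0 = 0).  F_eta = sum_{i>=1} c_i tau^i is the unique element of
tau T_s[[tau]] with F_eta theta - theta F_eta = eta_theta exp_phi (coefficientwise below).\<close>
definition F_rel :: "nat \<Rightarrow> 'c::field \<Rightarrow> (nat \<Rightarrow> 'c tate) \<Rightarrow> (nat \<Rightarrow> 'c tate) \<Rightarrow> (nat \<Rightarrow> 'c tate) \<Rightarrow> bool" where
  "F_rel q \<theta> \<alpha> \<eta> c \<longleftrightarrow> c 0 = tzero \<and>
     (\<forall>i. tadd (tscale (\<theta> ^ (q ^ i)) (c i)) (tneg (tscale \<theta> (c i))) =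
          tsum_fin (\<lambda>k. tmul (\<eta> k) (tfrobn q k (\<alpha> (i - k)))) {k. 1 \<le> k \<and> k \<le> i})"

definition F_coeffs :: "nat \<Rightarrow> 'c::field \<Rightarrow> nat \<Rightarrow> (nat \<Rightarrow> 'c tate) \<Rightarrow> (nat \<Rightarrow> 'c tate) \<Rightarrow> nat \<Rightarrow> 'c tate" where
  "F_coeffs q \<theta> r A \<eta> = (THE c. F_rel q \<theta> (exp_coeffs q \<theta> r A) \<eta> c)"

text \<open>delta^0_theta = phi_theta - theta, delta^j_theta = tau^j.\<close>
definition delta0 :: "nat \<Rightarrow> (nat \<Rightarrow> 'c::field tate) \<Rightarrow> nat \<Rightarrow> 'c tate" where
  "delta0 r A = (\<lambda>k. if 1 \<le> k \<and> k \<le> r then A k else tzero)"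
definition deltaj :: "nat \<Rightarrow> nat \<Rightarrow> 'c::field tate" where
  "deltaj j = (\<lambda>k. if k = j then tone else tzero)"

definition agf_coeff :: "('c::field \<Rightarrow> real) \<Rightarrow> nat \<Rightarrow> 'c \<Rightarrow> nat \<Rightarrow> (nat \<Rightarrow> 'c tate) \<Rightarrow> 'c tate \<Rightarrow> nat \<Rightarrow> 'c tate" where
  "agf_coeff v q \<theta> r A lam n = exp_apply v q \<theta> r A (tscale (inverse (\<theta> ^ (n + 1))) lam)"

definition agf_twist_eval :: "('c::field \<Rightarrow> real) \<Rightarrow> nat \<Rightarrow> 'c \<Rightarrow> nat \<Rightarrow> (nat \<Rightarrow> 'c tate) \<Rightarrow> 'c tate \<Rightarrow> nat \<Rightarrow> 'c \<Rightarrow> 'c tate" where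
  "agf_twist_eval v q \<theta> r A lam j z =
     (THE S. tate_sums v (\<lambda>n. tscale (z ^ n) (tfrobn q j (agf_coeff v q \<theta> r A lam n))) S)"

text \<open>The meromorphic continuation of f_lambda: f_lambda(z) = sum_n alpha_n lambda^(n) / (theta^(q^n) - z).\<close>
definition agf_mero_terms :: "nat \<Rightarrow> 'c::field \<Rightarrow> nat \<Rightarrow> (nat \<Rightarrow> 'c tate) \<Rightarrow> 'c tate \<Rightarrow> 'c \<Rightarrow> nat \<Rightarrow> 'c tate" where
  "agf_mero_terms q \<theta> r A lam z n =
     tscale (inverse (\<theta> ^ (q ^ n) - z)) (tmul (exp_coeffs q \<theta> r A n) (tfrobn q n lam))"

definition agf_has_residue_at_theta :: "('c::field \<Rightarrow> real) \<Rightarrow> nat \<Rightarrow> 'c \<Rightarrow> nat \<Rightarrow> (nat \<Rightarrow> 'c tate) \<Rightarrow> 'c tate \<Rightarrow> 'c tate \<Rightarrow> bool" where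
  "agf_has_residue_at_theta v q \<theta> r A lam R \<longleftrightarrow>
     (\<forall>\<epsilon>>0. \<exists>\<delta>>0. \<forall>z. 0 < v (z - \<theta>) \<and> v (z - \<theta>) < \<delta> \<longrightarrow>
        (\<exists>S. tate_sums v (agf_mero_terms q \<theta> r A lam z) S \<and>
             (\<forall>e. v ((z - \<theta>) * S e - R e) < \<epsilon>)))"

end

theory Submission
  imports Defs "HOL-Computational_Algebra.Primes"
begin

text \<open>
  Write \<alpha>_i for the coefficients of exp_phi and b_m = \<alpha>_m \<lambda>^(m). As \<lambda> is a period,
  \<Sum>_m b_m = 0 with b_0 = \<lambda>, so the b_m tend to 0 uniformly and are uniformly bounded.
  Solving F_eta \<theta> - \<theta> F_eta = eta_\<theta> exp_phi coefficientwise, the coefficients of F_(delta^0)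
  are the \<alpha>_i (i \<ge> 1) and those of F_(delta^j) are \<alpha>_(i-j)^(j) / (\<theta>^(q^i) - \<theta>) (i \<ge> j).

  Hence F_(delta^0)(\<lambda>) = \<Sum>_(m\<ge>1) b_m = -\<lambda>. The function f_\<lambda>(z) = \<Sum>_m b_m / (\<theta>^(q^m) - z)
  has residue -\<lambda> at \<theta>, coming from its term m = 0: for m \<ge> 1 and z near \<theta> one has
  |\<theta>^(q^m) - z| = q^(q^m) \<ge> 1, so the other terms stay bounded.

  For j \<ge> 1, F_(delta^j)(\<lambda>) = \<Sum>_m b_m^(j) / (\<theta>^Q - \<theta>) with Q = q^(m+j). Expanding
  1 / (\<theta>^Q - \<theta>) = \<Sum>_n \<theta>^n / \<theta>^((n+1)Q) and exchanging the two sums yields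
  \<Sum>_n \<theta>^n exp_phi(\<lambda>/\<theta>^(n+1))^(j), because the q^j-th power map is additive and continuous.
  The exchange is legitimate since the geometric tail after N terms has absolute value at most
  q^(-N), uniformly in m.
\<close>

section \<open>The Tate algebra\<close>

lemma tzero_apply [simp]: "tzero e = 0"
  by (simp add: tzero_def)

lemma tmul_tzero_left [simp]: "tmul tzero g = tzero"
  by (simp add: tmul_def tzero_def)

lemma tmul_tscale_left: "tmul (tscale c f) g = tscale c (tmul f g)"
  by (simp add: tmul_def tscale_def sum_distrib_left mult.assoc)

lemma tmul_tscale_right: "tmul f (tscale c g) = tscale c (tmul f g)"
  by (simp add: tmul_def tscale_def sum_distrib_left mult.left_commute)

lemma tfrobn_0 [simp]: "tfrobn q 0 f = f"
  by (simp add: tfrobn_def)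

lemma tfrobn_tfrobn: "tfrobn q j (tfrobn q m f) = tfrobn q (m + j) f"
  by (simp add: tfrobn_def power_add flip: power_mult)

lemma tfrobn_tscale: "tfrobn q m (tscale c f) = tscale (c ^ q ^ m) (tfrobn q m f)"
  by (simp add: tfrobn_def tscale_def power_mult_distrib)

lemma tscale_eq_tadd_tscale_iff:
  assumes "a \<noteq> b"
  shows "tscale a x = tadd (tscale b x) y \<longleftrightarrow> x = tscale (inverse (a - b)) y"
proof -
  have "a * x e = b * x e + y e \<longleftrightarrow> x e = inverse (a - b) * y e" for e
    using assms by (auto simp: field_simps)
  then show ?thesis
    by (simp add: fun_eq_iff tscale_def tadd_def)
qed

lemma tadd_tscale_tneg_iff:
  assumes "a \<noteq> b"
  shows "tadd (tscale a x) (tneg (tscale b x)) = y \<longleftrightarrow> x = tscale (inverse (a - b)) y"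
proof -
  have "a * x e + - (b * x e) = y e \<longleftrightarrow> x e = inverse (a - b) * y e" for e
    using assms by (auto simp: field_simps)
  then show ?thesis
    by (simp add: fun_eq_iff tscale_def tadd_def tneg_def)
qed

text \<open>
  The product tmul f g at e sums over all a \<le> e, a set that is infinite (so that the HOL sum
  is 0) when e has infinite support; tone is therefore a unit only for elements vanishing there.
\<close>
definition vanishes_off_finite_support :: "'c::field tate \<Rightarrow> bool" where
  "vanishes_off_finite_support f \<longleftrightarrow> (\<forall>e. infinite {a. \<forall>i. a i \<le> e i} \<longrightarrow> f e = 0)"

lemma finite_exponents_below:
  fixes e :: "nat \<Rightarrow> nat"
  assumes "\<And>i. s \<le> i \<Longrightarrow> e i = 0"
  shows "finite {a. \<forall>i. a i \<le> e i}"
proof (rule finite_subset)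
  let ?M = "Max (e ` {..<s})"
  show "{a. \<forall>i. a i \<le> e i} \<subseteq> {a. \<forall>i. (i \<in> {..<s} \<longrightarrow> a i \<in> {..?M}) \<and> (i \<notin> {..<s} \<longrightarrow> a i = 0)}"
  proof (intro subsetI CollectI allI conjI impI)
    fix a i
    assume a: "a \<in> {a. \<forall>i. a i \<le> e i}"
    show "a i \<in> {..?M}" if "i \<in> {..<s}"
      using a Max_ge[of "e ` {..<s}" "e i"] that by (auto intro: le_trans)
    show "a i = 0" if "i \<notin> {..<s}"
    proof -
      have "a i \<le> e i"
        using a by simp
      moreover have "e i = 0"
        using assms that by simp
      ultimately show ?thesis
        by simp
    qed
  qed
  show "finite {a. \<forall>i. (i \<in> {..<s} \<longrightarrow> a i \<in> {..?M}) \<and> (i \<notin> {..<s} \<longrightarrow> a i = (0::nat))}"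
    by (rule finite_set_of_finite_funs) simp_all
qed

lemma in_tate_vanishes_off_finite_support:
  assumes "in_tate s v f"
  shows "vanishes_off_finite_support f"
  unfolding vanishes_off_finite_support_def
proof (intro allI impI)
  fix e :: "nat \<Rightarrow> nat"
  assume "infinite {a. \<forall>i. a i \<le> e i}"
  then have "\<exists>i\<ge>s. e i \<noteq> 0"
    using finite_exponents_below[of s e] by (meson not_le)
  then show "f e = 0"
    using assms unfolding in_tate_def by simp
qed

lemma tmul_tone:
  assumes "vanishes_off_finite_support g"
  shows "tmul tone g = g"
proof
  fix e
  show "tmul tone g e = g e"
  proof (cases "finite {a. \<forall>i. a i \<le> e i}")
    case True
    have "tmul tone g e = (\<Sum>a\<in>{a. \<forall>i. a i \<le> e i}. if a = (\<lambda>_. 0) then g e else 0)"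
      unfolding tmul_def tone_def tconst_def by (intro sum.cong) (auto simp: fun_eq_iff)
    also have "\<dots> = g e"
      using True by simp
    finally show ?thesis .
  qed (use assms in \<open>simp add: vanishes_off_finite_support_def tmul_def\<close>)
qed

lemma vanishes_off_finite_support_tone: "vanishes_off_finite_support tone"
  unfolding vanishes_off_finite_support_def
proof (intro allI impI)
  fix e :: "nat \<Rightarrow> nat"
  assume infinite: "infinite {a. \<forall>i. a i \<le> e i}"
  have "\<not> (\<forall>i. e i = 0)"
  proof
    assume "\<forall>i. e i = 0"
    then have "finite {a. \<forall>i. a i \<le> e i}"
      by (intro finite_exponents_below[of 0]) simp
    with infinite show False ..
  qed
  then show "tone e = 0"
    by (simp add: tone_def tconst_def)
qed

lemma vanishes_off_finite_support_tscale:
  "vanishes_off_finite_support f \<Longrightarrow> vanishes_off_finite_support (tscale c f)"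
  by (simp add: vanishes_off_finite_support_def tscale_def)

lemma vanishes_off_finite_support_tfrobn:
  "0 < q \<Longrightarrow> vanishes_off_finite_support f \<Longrightarrow> vanishes_off_finite_support (tfrobn q n f)"
  by (simp add: vanishes_off_finite_support_def tfrobn_def)

lemma vanishes_off_finite_support_tsum_fin:
  "vanishes_off_finite_support (tsum_fin (\<lambda>k. tmul (F k) (G k)) K)"
  by (simp add: vanishes_off_finite_support_def tsum_fin_def tmul_def)

section \<open>Series over a complete non-archimedean field\<close>

locale complete_nonarch_field =
  fixes v :: "'c::field \<Rightarrow> real"
  assumes v_nonneg: "0 \<le> v x"
    and v_eq_0_iff: "v x = 0 \<longleftrightarrow> x = 0"
    and v_mult: "v (x * y) = v x * v y"
    and v_add_le_max: "v (x + y) \<le> max (v x) (v y)"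
    and v_complete: "\<forall>\<epsilon>>0. \<exists>N. \<forall>m\<ge>N. \<forall>n\<ge>N. v ((X::nat \<Rightarrow> 'c) m - X n) < \<epsilon>
      \<Longrightarrow> \<exists>L. \<forall>\<epsilon>>0. \<exists>N. \<forall>n\<ge>N. v (X n - L) < \<epsilon>"
begin

lemma v_0 [simp]: "v 0 = 0"
  by (simp add: v_eq_0_iff)

lemma v_1 [simp]: "v 1 = 1"
  using v_mult[of 1 1] v_eq_0_iff[of 1] by simp

lemma v_minus [simp]: "v (- x) = v x"
proof -
  have "v (- 1) * v (- 1) = 1" and "0 \<le> v (- 1)"
    using v_mult[of "- 1" "- 1"] v_nonneg by simp_all
  then have "v (- 1) = 1"
    using power2_eq_1_iff[of "v (- 1)"] by (auto simp: power2_eq_square)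
  then show ?thesis
    using v_mult[of "- 1" x] by simp
qed

lemma v_minus_commute: "v (x - y) = v (y - x)"
  using v_minus[of "x - y"] by simp

lemma v_inverse: "v (inverse x) = inverse (v x)"
  using v_mult[of x "inverse x"] by (cases "x = 0") (auto intro: inverse_unique[symmetric])

lemma v_power: "v (x ^ n) = v x ^ n"
  by (induction n) (simp_all add: v_mult)

lemma v_diff_le_max: "v (x - y) \<le> max (v x) (v y)"
  using v_add_le_max[of x "- y"] by simp

lemma v_diff_eq_left:
  assumes "v y < v x"
  shows "v (x - y) = v x"
  using v_add_le_max[of x "- y"] v_add_le_max[of "x - y" y] assms by auto

lemma v_add_le: "v (x + y) \<le> v x + v y"
  using v_add_le_max[of x y] v_nonneg[of x] v_nonneg[of y] by linarith

lemma v_diff_le: "v (x - y) \<le> v x + v y"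
  using v_add_le[of x "- y"] by simp

lemma v_sum_le:
  assumes "\<And>k. k \<in> K \<Longrightarrow> v (f k) \<le> B" and "0 \<le> B"
  shows "v (sum f K) \<le> B"
  using assms
proof (induction K rule: infinite_finite_induct)
  case (insert k K)
  then have "v (f k) \<le> B" and "v (sum f K) \<le> B"
    by auto
  then show ?case
    using insert(1,2) by (simp add: order_trans[OF v_add_le_max])
qed simp_all

lemma v_sum_less:
  assumes "\<And>k. k \<in> K \<Longrightarrow> v (f k) < B" and "0 < B"
  shows "v (sum f K) < B"
  using assms
proof (induction K rule: infinite_finite_induct)
  case (insert k K)
  then have "max (v (f k)) (v (sum f K)) < B"
    by simp
  moreover have "v (sum f (insert k K)) \<le> max (v (f k)) (v (sum f K))"
    using insert(1,2) v_add_le_max by simp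
  ultimately show ?case
    by linarith
qed simp_all

definition vsums :: "(nat \<Rightarrow> 'c) \<Rightarrow> 'c \<Rightarrow> bool" where
  "vsums g s \<longleftrightarrow> (\<lambda>n. v (sum g {..<n} - s)) \<longlonglongrightarrow> 0"

lemma v_tendsto_0_dominated:
  assumes "\<And>n. v (x n) \<le> u n" and "u \<longlonglongrightarrow> 0"
  shows "(\<lambda>n. v (x n)) \<longlonglongrightarrow> 0"
  by (rule real_tendsto_sandwich[OF _ _ tendsto_const assms(2)]) (use assms(1) v_nonneg in auto)

lemma vsums_unique:
  assumes "vsums g s" and "vsums g t"
  shows "s = t"
proof -
  have "v (s - t) \<le> v (sum g {..<n} - t) + v (sum g {..<n} - s)" for n
    using v_diff_le[of "sum g {..<n} - t" "sum g {..<n} - s"] by simp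
  moreover have "(\<lambda>n. v (sum g {..<n} - t) + v (sum g {..<n} - s)) \<longlonglongrightarrow> 0"
    using assms unfolding vsums_def by (intro tendsto_add_zero)
  ultimately have "(\<lambda>n. v (s - t)) \<longlonglongrightarrow> 0"
    by (rule v_tendsto_0_dominated)
  then show ?thesis
    by (simp add: LIMSEQ_const_iff v_eq_0_iff)
qed

lemma vsums_add:
  assumes "vsums f s" and "vsums g t"
  shows "vsums (\<lambda>n. f n + g n) (s + t)"
proof -
  have "v (sum (\<lambda>n. f n + g n) {..<n} - (s + t)) \<le> v (sum f {..<n} - s) + v (sum g {..<n} - t)" for n
    using v_add_le[of "sum f {..<n} - s" "sum g {..<n} - t"] by (simp add: sum.distrib algebra_simps)
  moreover have "(\<lambda>n. v (sum f {..<n} - s) + v (sum g {..<n} - t)) \<longlonglongrightarrow> 0"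
    using assms unfolding vsums_def by (intro tendsto_add_zero)
  ultimately show ?thesis
    unfolding vsums_def by (rule v_tendsto_0_dominated)
qed

lemma vsums_cmult:
  assumes "vsums g s"
  shows "vsums (\<lambda>n. c * g n) (c * s)"
proof -
  have "v (sum (\<lambda>n. c * g n) {..<n} - c * s) = v c * v (sum g {..<n} - s)" for n
    by (simp add: v_mult flip: sum_distrib_left right_diff_distrib)
  then show ?thesis
    using assms unfolding vsums_def by (simp add: tendsto_mult_right_zero)
qed

lemma vsums_diff:
  assumes "vsums f s" and "vsums g t"
  shows "vsums (\<lambda>n. f n - g n) (s - t)"
  using vsums_add[OF assms(1) vsums_cmult[OF assms(2), of "- 1"]] by simp

lemma vsums_sum:
  assumes "finite I" and "\<And>i. i \<in> I \<Longrightarrow> vsums (f i) (s i)"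
  shows "vsums (\<lambda>n. \<Sum>i\<in>I. f i n) (\<Sum>i\<in>I. s i)"
  using assms
proof (induction I rule: finite_induct)
  case empty
  then show ?case
    by (simp add: vsums_def)
next
  case (insert i I)
  then show ?case
    using vsums_add[of "f i" "s i"] by simp
qed

lemma vsums_shift:
  assumes "vsums g s"
  shows "vsums (\<lambda>n. g (n + j)) (s - sum g {..<j})"
proof -
  have "sum (\<lambda>k. g (k + j)) {..<n} = sum g {..<n + j} - sum g {..<j}" for n
    by (induction n) (simp_all add: algebra_simps)
  then show ?thesis
    using LIMSEQ_ignore_initial_segment[of _ 0 j] assms unfolding vsums_def by simp
qed

lemma vsums_le:
  assumes "vsums g s" and "\<And>n. v (g n) \<le> B"
  shows "v s \<le> B"
proof -
  have "0 \<le> B"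
    using v_nonneg[of "g 0"] assms(2)[of 0] by linarith
  then have "v (sum g {..<n}) \<le> B" for n
    using assms(2) by (intro v_sum_le)
  moreover have "v s \<le> v (sum g {..<n}) + v (sum g {..<n} - s)" for n
    using v_diff_le[of "sum g {..<n}" "sum g {..<n} - s"] by simp
  ultimately have le: "v s \<le> v (sum g {..<n} - s) + B" for n
    by (smt (verit))
  have "(\<lambda>n. v (sum g {..<n} - s) + B) \<longlonglongrightarrow> 0 + B"
    using assms(1) unfolding vsums_def by (rule tendsto_add) (rule tendsto_const)
  then have "v s \<le> 0 + B"
    by (rule LIMSEQ_le_const) (use le in blast)
  then show ?thesis
    by simp
qed

lemma tate_sums_coeff:
  assumes "tate_sums v g S"
  shows "vsums (\<lambda>n. g n e) (S e)"
  using assms unfolding vsums_def LIMSEQ_iff tate_sums_def tate_tendsto_def tsum_fin_def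
  by (simp add: v_nonneg) blast

lemma tate_sums_unique:
  assumes "tate_sums v g S" and "tate_sums v g T"
  shows "S = T"
  using vsums_unique[OF tate_sums_coeff[OF assms(1)] tate_sums_coeff[OF assms(2)]] by blast

lemma the_tate_sums:
  assumes "tate_sums v g S"
  shows "(THE S. tate_sums v g S) = S"
  using assms tate_sums_unique by blast

lemma tate_sums_if_error_le:
  assumes "\<And>n e. v (S e - (\<Sum>k<n. g k e)) \<le> u n" and "u \<longlonglongrightarrow> 0"
  shows "tate_sums v g S"
  unfolding tate_sums_def tate_tendsto_def tsum_fin_def
proof (intro allI impI)
  fix \<epsilon> :: real
  assume "0 < \<epsilon>"
  then obtain N where N: "\<forall>n\<ge>N. \<bar>u n\<bar> < \<epsilon>"
    using assms(2) unfolding LIMSEQ_iff by auto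
  have "v ((\<Sum>k<n. g k e) - S e) < \<epsilon>" if "N \<le> n" for n e
    using assms(1)[of e n] N that v_minus_commute[of "S e" "\<Sum>k<n. g k e"] by fastforce
  then show "\<exists>N. \<forall>n\<ge>N. \<forall>e. v ((\<Sum>k<n. g k e) - S e) < \<epsilon>"
    by blast
qed

lemma tate_sums_zero_first:
  assumes "tate_sums v g S"
  shows "tate_sums v (\<lambda>n. if n = 0 then tzero else g n) (\<lambda>e. S e - g 0 e)"
  unfolding tate_sums_def tate_tendsto_def tsum_fin_def
proof (intro allI impI)
  fix \<epsilon> :: real
  assume "0 < \<epsilon>"
  then obtain N where N: "\<forall>n\<ge>N. \<forall>e. v ((\<Sum>k<n. g k e) - S e) < \<epsilon>"
    using assms unfolding tate_sums_def tate_tendsto_def tsum_fin_def by blast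
  have drop: "(\<Sum>k<n. (if k = 0 then tzero else g k) e) = (\<Sum>k<n. g k e) - g 0 e"
    if "1 \<le> n" for n e
  proof -
    have "(\<Sum>k<n. (if k = 0 then tzero else g k) e) = (\<Sum>k<n. g k e - (if k = 0 then g 0 e else 0))"
      by (intro sum.cong) auto
    then show ?thesis
      using that by (simp add: sum_subtractf)
  qed
  have "v ((\<Sum>k<n. (if k = 0 then tzero else g k) e) - (S e - g 0 e)) < \<epsilon>" if "max N 1 \<le> n" for n e
    using N drop[of n e] that by simp
  then show "\<exists>N. \<forall>n\<ge>N. \<forall>e. v ((\<Sum>k<n. (if k = 0 then tzero else g k) e) - (S e - g 0 e)) < \<epsilon>"
    by blast
qed

definition uniformly_null :: "(nat \<Rightarrow> 'c tate) \<Rightarrow> bool" where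
  "uniformly_null g \<longleftrightarrow> (\<forall>\<epsilon>>0. \<exists>N. \<forall>n\<ge>N. \<forall>e. v (g n e) < \<epsilon>)"

lemma tate_sums_imp_uniformly_null:
  assumes "tate_sums v g S"
  shows "uniformly_null g"
  unfolding uniformly_null_def
proof (intro allI impI)
  fix \<epsilon> :: real
  assume "0 < \<epsilon>"
  then obtain N where N: "\<forall>n\<ge>N. \<forall>e. v ((\<Sum>k<n. g k e) - S e) < \<epsilon>"
    using assms unfolding tate_sums_def tate_tendsto_def tsum_fin_def by blast
  have "v (g n e) < \<epsilon>" if "N \<le> n" for n e
  proof -
    have split: "g n e = ((\<Sum>k<Suc n. g k e) - S e) - ((\<Sum>k<n. g k e) - S e)"
      by simp
    have "v (g n e) \<le> max (v ((\<Sum>k<Suc n. g k e) - S e)) (v ((\<Sum>k<n. g k e) - S e))"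
      by (subst split) (rule v_diff_le_max)
    moreover have "max (v ((\<Sum>k<Suc n. g k e) - S e)) (v ((\<Sum>k<n. g k e) - S e)) < \<epsilon>"
      using N[rule_format, of "Suc n" e] N[rule_format, of n e] that by simp
    ultimately show ?thesis
      by linarith
  qed
  then show "\<exists>N. \<forall>n\<ge>N. \<forall>e. v (g n e) < \<epsilon>"
    by blast
qed

lemma partial_sums_close:
  fixes g :: "nat \<Rightarrow> 'c"
  assumes "\<And>k. N \<le> k \<Longrightarrow> v (g k) < \<epsilon>" and "0 < \<epsilon>" and "N \<le> m" and "N \<le> n"
  shows "v (sum g {..<m} - sum g {..<n}) < \<epsilon>"
proof -
  have close: "v (sum g {..<b} - sum g {..<a}) < \<epsilon>" if "N \<le> a" "a \<le> b" for a b
  proof -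
    have "sum g {..<b} - sum g {..<a} = sum g {a..<b}"
      using that sum_diff_nat_ivl[of 0 a b g] by (simp add: atLeast0LessThan)
    moreover have "v (sum g {a..<b}) < \<epsilon>"
      using that assms(1,2) by (intro v_sum_less) auto
    ultimately show ?thesis
      by simp
  qed
  show ?thesis
  proof (cases "n \<le> m")
    case True
    then show ?thesis
      using close[of n m] assms(4) by simp
  next
    case False
    then show ?thesis
      using close[of m n] assms(3) v_minus_commute[of "sum g {..<m}" "sum g {..<n}"] by simp
  qed
qed

lemma uniformly_null_partial_sums_Cauchy:
  assumes "uniformly_null g" and "0 < \<epsilon>"
  shows "\<exists>N. \<forall>m\<ge>N. \<forall>n\<ge>N. \<forall>e. v ((\<Sum>k<m. g k e) - (\<Sum>k<n. g k e)) < \<epsilon>"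
proof -
  obtain N where "\<forall>n\<ge>N. \<forall>e. v (g n e) < \<epsilon>"
    using assms unfolding uniformly_null_def by blast
  then have "v ((\<Sum>k<m. g k e) - (\<Sum>k<n. g k e)) < \<epsilon>" if "N \<le> m" "N \<le> n" for m n e
    using that assms(2) by (intro partial_sums_close) auto
  then show ?thesis
    by blast
qed

lemma uniformly_null_imp_tate_sums:
  assumes "uniformly_null g"
  shows "\<exists>S. tate_sums v g S"
proof -
  note cauchy = uniformly_null_partial_sums_Cauchy[OF assms]
  have "\<exists>L. \<forall>\<epsilon>>0. \<exists>N. \<forall>n\<ge>N. v ((\<Sum>k<n. g k e) - L) < \<epsilon>" for e
    by (rule v_complete) (use cauchy in blast)
  then obtain S where S: "\<And>e \<epsilon>. 0 < \<epsilon> \<Longrightarrow> \<exists>N. \<forall>n\<ge>N. v ((\<Sum>k<n. g k e) - S e) < \<epsilon>"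
    by metis
  have "tate_sums v g S"
    unfolding tate_sums_def tate_tendsto_def tsum_fin_def
  proof (intro allI impI)
    fix \<epsilon> :: real
    assume "0 < \<epsilon>"
    then obtain N where N: "\<forall>m\<ge>N. \<forall>n\<ge>N. \<forall>e. v ((\<Sum>k<m. g k e) - (\<Sum>k<n. g k e)) < \<epsilon>"
      using cauchy by blast
    have "v ((\<Sum>k<n. g k e) - S e) < \<epsilon>" if "N \<le> n" for n e
    proof -
      obtain M where M: "\<forall>m\<ge>M. v ((\<Sum>k<m. g k e) - S e) < \<epsilon>"
        using S \<open>0 < \<epsilon>\<close> by blast
      let ?m = "max M N"
      have split: "(\<Sum>k<n. g k e) - S e
          = ((\<Sum>k<n. g k e) - (\<Sum>k<?m. g k e)) + ((\<Sum>k<?m. g k e) - S e)"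
        by simp
      have "v ((\<Sum>k<n. g k e) - S e)
          \<le> max (v ((\<Sum>k<n. g k e) - (\<Sum>k<?m. g k e))) (v ((\<Sum>k<?m. g k e) - S e))"
        by (subst split) (rule v_add_le_max)
      moreover have "max (v ((\<Sum>k<n. g k e) - (\<Sum>k<?m. g k e))) (v ((\<Sum>k<?m. g k e) - S e)) < \<epsilon>"
        using M N that by simp
      ultimately show ?thesis
        by linarith
    qed
    then show "\<exists>N. \<forall>n\<ge>N. \<forall>e. v ((\<Sum>k<n. g k e) - S e) < \<epsilon>"
      by blast
  qed
  then show ?thesis
    by blast
qed

lemma uniformly_null_dominated:
  assumes "uniformly_null h" and "\<And>n e. N \<le> n \<Longrightarrow> v (g n e) \<le> v (h n e)"
  shows "uniformly_null g"
  unfolding uniformly_null_def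
proof (intro allI impI)
  fix \<epsilon> :: real
  assume "0 < \<epsilon>"
  then obtain M where "\<forall>n\<ge>M. \<forall>e. v (h n e) < \<epsilon>"
    using assms(1) unfolding uniformly_null_def by blast
  then have "\<forall>n\<ge>max M N. \<forall>e. v (g n e) < \<epsilon>"
    using assms(2) by (meson max.boundedE order_le_less_trans)
  then show "\<exists>N. \<forall>n\<ge>N. \<forall>e. v (g n e) < \<epsilon>" ..
qed

lemma uniformly_null_shift:
  assumes "uniformly_null g"
  shows "uniformly_null (\<lambda>n. g (n - j))"
  unfolding uniformly_null_def
proof (intro allI impI)
  fix \<epsilon> :: real
  assume "0 < \<epsilon>"
  then obtain N where "\<forall>n\<ge>N. \<forall>e. v (g n e) < \<epsilon>"
    using assms unfolding uniformly_null_def by blast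
  then have "\<forall>n\<ge>N + j. \<forall>e. v (g (n - j) e) < \<epsilon>"
    by simp
  then show "\<exists>N. \<forall>n\<ge>N. \<forall>e. v (g (n - j) e) < \<epsilon>" ..
qed

lemma uniformly_null_tfrobn:
  assumes "uniformly_null g" and "0 < q"
  shows "uniformly_null (\<lambda>n. tfrobn q j (g n))"
  unfolding uniformly_null_def
proof (intro allI impI)
  fix \<epsilon> :: real
  assume "0 < \<epsilon>"
  then obtain N where N: "\<forall>n\<ge>N. \<forall>e. v (g n e) < min \<epsilon> 1"
    using assms(1) unfolding uniformly_null_def by (meson min_less_iff_conj zero_less_one)
  have "v (tfrobn q j (g n) e) < \<epsilon>" if "N \<le> n" for n e
  proof -
    have small: "v (g n e) < min \<epsilon> 1"
      using N that by blast
    then have "v (g n e) ^ q ^ j \<le> v (g n e) ^ 1"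
      using assms(2) v_nonneg by (intro power_decreasing) auto
    then show ?thesis
      using small by (simp add: tfrobn_def v_power)
  qed
  then show "\<exists>N. \<forall>n\<ge>N. \<forall>e. v (tfrobn q j (g n) e) < \<epsilon>"
    by blast
qed

definition bounded_coeffs :: "'c tate \<Rightarrow> bool" where
  "bounded_coeffs f \<longleftrightarrow> (\<exists>B. \<forall>e. v (f e) \<le> B)"

lemma bounded_coeffsE:
  assumes "bounded_coeffs f"
  obtains B where "0 \<le> B" and "\<And>e. v (f e) \<le> B"
proof -
  obtain B where B: "\<And>e. v (f e) \<le> B"
    using assms unfolding bounded_coeffs_def by blast
  moreover have "0 \<le> B"
    using v_nonneg B by (rule order_trans)
  ultimately show ?thesis
    using that by blast
qed

lemma in_tate_imp_bounded_coeffs: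
  assumes "in_tate s v f"
  shows "bounded_coeffs f"
proof -
  let ?M = "Max ((\<lambda>e. v (f e)) ` {e. 1 \<le> v (f e)})"
  have "finite {e. 1 \<le> v (f e)}"
    using assms unfolding in_tate_def by simp
  then have "v (f e) \<le> ?M" if "1 \<le> v (f e)" for e
    using that by (intro Max_ge) auto
  then have "v (f e) \<le> max 1 ?M" for e
    by (cases "1 \<le> v (f e)") (auto simp: le_max_iff_disj)
  then show ?thesis
    unfolding bounded_coeffs_def by blast
qed

lemma bounded_coeffs_tone: "bounded_coeffs tone"
  unfolding bounded_coeffs_def tone_def tconst_def by (intro exI[of _ 1]) simp

lemma bounded_coeffs_tmul:
  assumes "bounded_coeffs f" and "bounded_coeffs g"
  shows "bounded_coeffs (tmul f g)"
proof -
  obtain B C where "0 \<le> B" "\<And>e. v (f e) \<le> B" "0 \<le> C" "\<And>e. v (g e) \<le> C"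
    using assms by (meson bounded_coeffsE)
  then have "v (tmul f g e) \<le> B * C" for e
    unfolding tmul_def by (intro v_sum_le) (auto simp: v_mult intro: mult_mono v_nonneg)
  then show ?thesis
    unfolding bounded_coeffs_def by blast
qed

lemma bounded_coeffs_tscale:
  assumes "bounded_coeffs f"
  shows "bounded_coeffs (tscale c f)"
proof -
  obtain B where "\<And>e. v (f e) \<le> B"
    using assms bounded_coeffsE by blast
  then have "v (tscale c f e) \<le> v c * B" for e
    by (simp add: tscale_def v_mult mult_left_mono v_nonneg)
  then show ?thesis
    unfolding bounded_coeffs_def by blast
qed

lemma bounded_coeffs_tfrobn:
  assumes "bounded_coeffs f"
  shows "bounded_coeffs (tfrobn q n f)"
proof -
  obtain B where "\<And>e. v (f e) \<le> B"
    using assms bounded_coeffsE by blast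
  then have "v (tfrobn q n f e) \<le> B ^ q ^ n" for e
    by (simp add: tfrobn_def v_power power_mono v_nonneg)
  then show ?thesis
    unfolding bounded_coeffs_def by blast
qed

lemma bounded_coeffs_tsum_fin:
  assumes "finite K" and "\<And>k. k \<in> K \<Longrightarrow> bounded_coeffs (F k)"
  shows "bounded_coeffs (tsum_fin F K)"
proof -
  have "\<forall>k\<in>K. \<exists>B. \<forall>e. v (F k e) \<le> B"
    using assms(2) unfolding bounded_coeffs_def by blast
  then obtain B where B: "\<And>k e. k \<in> K \<Longrightarrow> v (F k e) \<le> B k"
    by metis
  have "v (F k e) \<le> (\<Sum>k\<in>K. \<bar>B k\<bar>)" if "k \<in> K" for k e
    using B[OF that, of e] member_le_sum[OF that, of "\<lambda>k. \<bar>B k\<bar>"] assms(1) by force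
  then have "v (tsum_fin F K e) \<le> (\<Sum>k\<in>K. \<bar>B k\<bar>)" for e
    unfolding tsum_fin_def by (intro v_sum_le sum_nonneg) auto
  then show ?thesis
    unfolding bounded_coeffs_def by blast
qed

lemma uniformly_null_imp_uniform_bound:
  assumes "\<And>m. bounded_coeffs (g m)" and "uniformly_null g"
  obtains B where "0 \<le> B" and "\<And>m e. v (g m e) \<le> B"
proof -
  obtain N where N: "\<And>m e. N \<le> m \<Longrightarrow> v (g m e) < 1"
    using assms(2) unfolding uniformly_null_def by (meson zero_less_one)
  have "\<forall>m. \<exists>B. \<forall>e. v (g m e) \<le> B"
    using assms(1) unfolding bounded_coeffs_def by blast
  then obtain B where B: "\<And>m e. v (g m e) \<le> B m"
    by metis
  have "v (g m e) \<le> 1 + (\<Sum>k<N. \<bar>B k\<bar>)" for m e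
  proof (cases "m < N")
    case True
    then show ?thesis
      using B[of m e] member_le_sum[of m "{..<N}" "\<lambda>k. \<bar>B k\<bar>"] by force
  next
    case False
    then have "v (g m e) < 1"
      using N by simp
    moreover have "0 \<le> (\<Sum>k<N. \<bar>B k\<bar>)"
      by (simp add: sum_nonneg)
    ultimately show ?thesis
      by linarith
  qed
  moreover have "0 \<le> 1 + (\<Sum>k<N. \<bar>B k\<bar>)"
    by (simp add: sum_nonneg)
  ultimately show ?thesis
    using that by blast
qed

end

section \<open>The field C_infinity\<close>

lemma inverse_diff_partial_geometric:
  fixes \<theta> :: "'a::field"
  assumes "\<theta> \<noteq> 0" and "\<theta> ^ Q \<noteq> \<theta>"
  shows "inverse (\<theta> ^ Q - \<theta>) - (\<Sum>n<N. \<theta> ^ n * inverse (\<theta> ^ (n + 1)) ^ Q)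
       = (\<theta> * inverse (\<theta> ^ Q)) ^ N * inverse (\<theta> ^ Q - \<theta>)"
proof -
  define w where "w = \<theta> * inverse (\<theta> ^ Q)"
  have "w \<noteq> 1"
    using assms by (auto simp: w_def field_simps)
  have "\<theta> ^ n * inverse (\<theta> ^ (n + 1)) ^ Q = w ^ n * inverse (\<theta> ^ Q)" for n
    by (simp add: w_def power_mult_distrib power_inverse mult.commute flip: power_mult)
  then have "(\<Sum>n<N. \<theta> ^ n * inverse (\<theta> ^ (n + 1)) ^ Q) = (\<Sum>n<N. w ^ n) * inverse (\<theta> ^ Q)"
    by (simp add: sum_distrib_right)
  also have "\<dots> = inverse (\<theta> ^ Q) * ((1 - w ^ N) / (1 - w))"
    using \<open>w \<noteq> 1\<close> by (simp add: sum_gp_strict)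
  finally have "(\<Sum>n<N. \<theta> ^ n * inverse (\<theta> ^ (n + 1)) ^ Q) = inverse (\<theta> ^ Q) * ((1 - w ^ N) / (1 - w))" .
  moreover have inverse_diff: "inverse (\<theta> ^ Q - \<theta>) = inverse (\<theta> ^ Q) / (1 - w)"
    using assms by (simp add: w_def field_simps)
  ultimately have "inverse (\<theta> ^ Q - \<theta>) - (\<Sum>n<N. \<theta> ^ n * inverse (\<theta> ^ (n + 1)) ^ Q)
      = inverse (\<theta> ^ Q) / (1 - w) - inverse (\<theta> ^ Q) * ((1 - w ^ N) / (1 - w))"
    by simp
  also have "\<dots> = w ^ N * (inverse (\<theta> ^ Q) / (1 - w))"
    by (simp add: diff_divide_distrib right_diff_distrib)
  finally show ?thesis
    unfolding w_def inverse_diff .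
qed

locale Cinf_field = complete_nonarch_field v for v :: "'c::field \<Rightarrow> real" +
  fixes q :: nat and \<theta> :: 'c
  assumes prime_CHAR: "prime CHAR('c)"
    and q_CHAR_power: "\<exists>k>0. q = CHAR('c) ^ k"
    and v_theta: "v \<theta> = real q"

lemma CHAR_eq_prime:
  assumes "prime p" and "of_nat p = (0::'a::semiring_1)"
  shows "CHAR('a) = p"
proof -
  have "CHAR('a) dvd p"
    using assms(2) by (simp add: of_nat_eq_0_iff_char_dvd)
  moreover have "CHAR('a) \<noteq> 1"
    by simp
  ultimately show ?thesis
    using assms(1) by (auto simp: prime_nat_iff)
qed

lemma is_Cinf_imp_Cinf_field:
  fixes v :: "'c::field \<Rightarrow> real"
  assumes "is_Cinf q v \<theta>"
  shows "Cinf_field v q \<theta>"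
proof -
  obtain p k where "prime p" "0 < k" "q = p ^ k" "of_nat p = (0::'c)"
    using assms unfolding is_Cinf_def by blast
  moreover from this have "CHAR('c) = p"
    by (intro CHAR_eq_prime)
  moreover have "complete_nonarch_field v"
    using assms unfolding is_Cinf_def complete_nonarch_field_def by (elim conjE) (intro conjI allI impI; blast)
  moreover have "v \<theta> = real q"
    using assms unfolding is_Cinf_def by (elim conjE)
  ultimately show ?thesis
    by (intro Cinf_field.intro Cinf_field_axioms.intro) auto
qed

context Cinf_field
begin

lemma q_ge_2: "2 \<le> q"
proof -
  obtain k where "0 < k" "q = CHAR('c) ^ k"
    using q_CHAR_power by blast
  moreover have "2 \<le> CHAR('c)"
    using prime_CHAR by (rule prime_ge_2_nat)
  ultimately show ?thesis
    using self_le_power[of "CHAR('c)" k] by simp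
qed

lemma q_power_ge_2: "1 \<le> n \<Longrightarrow> 2 \<le> q ^ n"
  using q_ge_2 self_le_power[of q n] by simp

lemma theta_nonzero: "\<theta> \<noteq> 0"
  using v_theta q_ge_2 by auto

lemma power_q_power_sum:
  fixes f :: "'a \<Rightarrow> 'c"
  shows "(\<Sum>i\<in>K. f i) ^ q ^ n = (\<Sum>i\<in>K. f i ^ q ^ n)"
proof -
  obtain k where "q = CHAR('c) ^ k"
    using q_CHAR_power by blast
  then have "q ^ n = CHAR('c) ^ (k * n)"
    by (simp add: power_mult)
  then show ?thesis
    by (rule freshmans_dream_sum'[OF prime_CHAR])
qed

lemma power_q_power_diff: "(x - y :: 'c) ^ q ^ n = x ^ q ^ n - y ^ q ^ n"
  using power_q_power_sum[of "\<lambda>i. if i then x - y else y" UNIV n] by (simp add: UNIV_bool)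

lemma tfrobn_tmul:
  fixes f g :: "'c tate"
  shows "tfrobn q j (tmul f g) = tmul (tfrobn q j f) (tfrobn q j g)"
  by (simp add: fun_eq_iff tfrobn_def tmul_def power_q_power_sum power_mult_distrib)

lemma vsums_power_q_power:
  assumes "vsums g s"
  shows "vsums (\<lambda>n. g n ^ q ^ k) (s ^ q ^ k)"
proof -
  have "v (sum (\<lambda>n. g n ^ q ^ k) {..<n} - s ^ q ^ k) = v (sum g {..<n} - s) ^ q ^ k" for n
    by (simp add: v_power flip: power_q_power_sum power_q_power_diff)
  moreover have "(\<lambda>n. v (sum g {..<n} - s) ^ q ^ k) \<longlonglongrightarrow> 0 ^ q ^ k"
    using assms unfolding vsums_def by (rule tendsto_power)
  ultimately show ?thesis
    using assms q_ge_2 unfolding vsums_def by simp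
qed

lemma v_theta_power_diff:
  assumes "2 \<le> Q" and "v (z - \<theta>) \<le> 1"
  shows "v (\<theta> ^ Q - z) = real q ^ Q"
proof -
  have "v z \<le> real q"
    using v_add_le_max[of "z - \<theta>" \<theta>] assms(2) v_theta q_ge_2 by simp
  also have "real q < real q ^ Q"
    using power_strict_increasing_iff[of "real q" 1 Q] assms(1) q_ge_2 by simp
  finally show ?thesis
    using v_diff_eq_left[of z "\<theta> ^ Q"] v_theta by (simp add: v_power)
qed

lemma theta_power_q_power_neq: "1 \<le> i \<Longrightarrow> \<theta> ^ q ^ i \<noteq> \<theta>"
  using v_theta_power_diff[OF q_power_ge_2, of i \<theta>] q_ge_2 by auto

lemma v_inverse_theta_power_diff_le_1:
  assumes "2 \<le> Q" and "v (z - \<theta>) \<le> 1"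
  shows "v (inverse (\<theta> ^ Q - z)) \<le> 1"
proof -
  have "1 \<le> real q ^ Q"
    using q_ge_2 by (simp add: one_le_power)
  then show ?thesis
    using v_theta_power_diff[OF assms] by (simp add: v_inverse inverse_le_1_iff)
qed

lemma v_theta_over_theta_power:
  assumes "2 \<le> Q"
  shows "v (\<theta> * inverse (\<theta> ^ Q)) \<le> inverse (real q)"
proof -
  have "real q * real q \<le> real q ^ Q"
    using power_increasing[of 2 Q "real q"] assms q_ge_2 by (simp add: power2_eq_square)
  have "v (\<theta> * inverse (\<theta> ^ Q)) = real q / real q ^ Q"
    by (simp add: v_mult v_inverse v_power v_theta divide_inverse)
  also have "\<dots> \<le> inverse (real q)"
    using \<open>real q * real q \<le> real q ^ Q\<close> q_ge_2 by (simp add: field_simps)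
  finally show ?thesis .
qed

lemma geometric_expansion_error:
  assumes Q: "\<And>m. 2 \<le> Q m"
    and F: "vsums (\<lambda>m. inverse (\<theta> ^ Q m - \<theta>) * d m) F"
    and H: "\<And>n. vsums (\<lambda>m. \<theta> ^ n * inverse (\<theta> ^ (n + 1)) ^ Q m * d m) (H n)"
    and d: "\<And>m. v (d m) \<le> B"
  shows "v (F - (\<Sum>n<N. H n)) \<le> B / real q ^ N"
proof (rule vsums_le)
  show "vsums (\<lambda>m. inverse (\<theta> ^ Q m - \<theta>) * d m - (\<Sum>n<N. \<theta> ^ n * inverse (\<theta> ^ (n + 1)) ^ Q m * d m))
      (F - (\<Sum>n<N. H n))"
    using F H by (intro vsums_diff vsums_sum) auto
next
  fix m
  have "\<theta> ^ Q m \<noteq> \<theta>"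
    using v_theta_power_diff[OF Q, of \<theta> m] q_ge_2 by auto
  have "inverse (\<theta> ^ Q m - \<theta>) * d m - (\<Sum>n<N. \<theta> ^ n * inverse (\<theta> ^ (n + 1)) ^ Q m * d m)
      = (inverse (\<theta> ^ Q m - \<theta>) - (\<Sum>n<N. \<theta> ^ n * inverse (\<theta> ^ (n + 1)) ^ Q m)) * d m"
    by (simp only: left_diff_distrib sum_distrib_right)
  also have "\<dots> = (\<theta> * inverse (\<theta> ^ Q m)) ^ N * inverse (\<theta> ^ Q m - \<theta>) * d m"
    by (simp only: inverse_diff_partial_geometric[OF theta_nonzero \<open>\<theta> ^ Q m \<noteq> \<theta>\<close>])
  also have "v \<dots> = v (\<theta> * inverse (\<theta> ^ Q m)) ^ N * v (inverse (\<theta> ^ Q m - \<theta>)) * v (d m)"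
    by (simp only: v_mult v_power)
  also have "\<dots> \<le> inverse (real q) ^ N * 1 * B"
    using v_theta_over_theta_power[OF Q] v_inverse_theta_power_diff_le_1[OF Q, of \<theta>] d v_nonneg
    by (intro mult_mono power_mono) auto
  finally show "v (inverse (\<theta> ^ Q m - \<theta>) * d m - (\<Sum>n<N. \<theta> ^ n * inverse (\<theta> ^ (n + 1)) ^ Q m * d m))
      \<le> B / real q ^ N"
    by (simp add: divide_inverse power_inverse mult.commute)
qed

end

section \<open>The coefficients of exp_phi and F_eta\<close>

lemma tsum_fin_cong [fundef_cong]:
  "K = K' \<Longrightarrow> (\<And>k. k \<in> K' \<Longrightarrow> F k = G k) \<Longrightarrow> tsum_fin F K = tsum_fin G K'"
  unfolding tsum_fin_def by (intro ext sum.cong) auto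

text \<open>A solution of exp_rel, which makes the definite description in exp_coeffs meaningful.\<close>

function exp_coeffs_rec :: "nat \<Rightarrow> 'c::field \<Rightarrow> nat \<Rightarrow> (nat \<Rightarrow> 'c tate) \<Rightarrow> nat \<Rightarrow> 'c tate" where
  "exp_coeffs_rec q \<theta> r A i = (if i = 0 then tone else
     tscale (inverse (\<theta> ^ q ^ i - \<theta>))
       (tsum_fin (\<lambda>k. tmul (A k) (tfrobn q k (exp_coeffs_rec q \<theta> r A (i - k))))
         {k. 1 \<le> k \<and> k \<le> r \<and> k \<le> i}))"
  by pat_completeness auto
termination
  by (relation "measure (\<lambda>(q, \<theta>, r, A, i). i)") simp_all

declare exp_coeffs_rec.simps [simp del]

context Cinf_field
begin

lemma exp_rel_iff:
  "exp_rel q \<theta> r A \<alpha> \<longleftrightarrow> \<alpha> 0 = tone \<and>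
    (\<forall>i\<ge>1. \<alpha> i = tscale (inverse (\<theta> ^ q ^ i - \<theta>))
       (tsum_fin (\<lambda>k. tmul (A k) (tfrobn q k (\<alpha> (i - k)))) {k. 1 \<le> k \<and> k \<le> r \<and> k \<le> i}))"
proof -
  define R where "R i = tsum_fin (\<lambda>k. tmul (A k) (tfrobn q k (\<alpha> (i - k)))) {k. 1 \<le> k \<and> k \<le> r \<and> k \<le> i}"
    for i
  have empty: "{k::nat. 1 \<le> k \<and> k \<le> r \<and> k \<le> 0} = {}"
    by auto
  have R0: "R 0 = tzero"
    unfolding R_def empty by (simp add: tsum_fin_def fun_eq_iff)
  have "tscale (\<theta> ^ q ^ i) (\<alpha> i) = tadd (tscale \<theta> (\<alpha> i)) (R i)
      \<longleftrightarrow> (1 \<le> i \<longrightarrow> \<alpha> i = tscale (inverse (\<theta> ^ q ^ i - \<theta>)) (R i))" for i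
    using tscale_eq_tadd_tscale_iff[OF theta_power_q_power_neq, of i]
    by (cases "i = 0") (auto simp: R0 fun_eq_iff tscale_def tadd_def)
  then show ?thesis
    unfolding exp_rel_def R_def[symmetric] by blast
qed

lemma exp_rel_exp_coeffs:
  "exp_rel q \<theta> r A (exp_coeffs q \<theta> r A)"
  unfolding exp_coeffs_def
proof (rule theI[where P = "exp_rel q \<theta> r A"])
  show "exp_rel q \<theta> r A (exp_coeffs_rec q \<theta> r A)"
    unfolding exp_rel_iff
  proof (intro conjI allI impI)
    show "exp_coeffs_rec q \<theta> r A 0 = tone"
      by (simp add: exp_coeffs_rec.simps)
  next
    fix i :: nat
    assume "1 \<le> i"
    then show "exp_coeffs_rec q \<theta> r A i = tscale (inverse (\<theta> ^ q ^ i - \<theta>))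
       (tsum_fin (\<lambda>k. tmul (A k) (tfrobn q k (exp_coeffs_rec q \<theta> r A (i - k)))) {k. 1 \<le> k \<and> k \<le> r \<and> k \<le> i})"
      by (subst exp_coeffs_rec.simps) simp
  qed
next
  fix \<alpha>
  assume rel: "exp_rel q \<theta> r A \<alpha>"
  show "\<alpha> = exp_coeffs_rec q \<theta> r A"
  proof
    fix i
    show "\<alpha> i = exp_coeffs_rec q \<theta> r A i"
    proof (induction i rule: less_induct)
      case (less i)
      then show ?case
        using rel unfolding exp_rel_iff
        by (subst exp_coeffs_rec.simps) (auto intro!: arg_cong[where f = "tscale _"] tsum_fin_cong)
    qed
  qed
qed

lemma F_rel_iff:
  "F_rel q \<theta> \<alpha> \<eta> c \<longleftrightarrow> c = (\<lambda>i. if i = 0 then tzero else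
     tscale (inverse (\<theta> ^ q ^ i - \<theta>)) (tsum_fin (\<lambda>k. tmul (\<eta> k) (tfrobn q k (\<alpha> (i - k)))) {k. 1 \<le> k \<and> k \<le> i}))"
proof -
  define R where "R i = tsum_fin (\<lambda>k. tmul (\<eta> k) (tfrobn q k (\<alpha> (i - k)))) {k. 1 \<le> k \<and> k \<le> i}" for i
  have empty: "{k::nat. 1 \<le> k \<and> k \<le> 0} = {}"
    by auto
  have R0: "R 0 = tzero"
    unfolding R_def empty by (simp add: tsum_fin_def fun_eq_iff)
  have "tadd (tscale (\<theta> ^ q ^ i) (c i)) (tneg (tscale \<theta> (c i))) = R i
      \<longleftrightarrow> (1 \<le> i \<longrightarrow> c i = tscale (inverse (\<theta> ^ q ^ i - \<theta>)) (R i))" for i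
    using tadd_tscale_tneg_iff[OF theta_power_q_power_neq, of i]
    by (cases "i = 0") (auto simp: R0 fun_eq_iff tscale_def tadd_def tneg_def)
  then show ?thesis
    unfolding F_rel_def R_def[symmetric] by (auto simp: fun_eq_iff)
qed

lemma F_coeffs_eq:
  "F_coeffs q \<theta> r A \<eta> = (\<lambda>i. if i = 0 then tzero else
     tscale (inverse (\<theta> ^ q ^ i - \<theta>))
       (tsum_fin (\<lambda>k. tmul (\<eta> k) (tfrobn q k (exp_coeffs q \<theta> r A (i - k)))) {k. 1 \<le> k \<and> k \<le> i}))"
  unfolding F_coeffs_def by (rule the_equality) (simp_all add: F_rel_iff)

lemma exp_coeffs_0: "exp_coeffs q \<theta> r A 0 = tone"
  using exp_rel_exp_coeffs unfolding exp_rel_iff by blast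

lemma exp_coeffs_step:
  assumes "1 \<le> i"
  shows "exp_coeffs q \<theta> r A i = tscale (inverse (\<theta> ^ q ^ i - \<theta>))
     (tsum_fin (\<lambda>k. tmul (A k) (tfrobn q k (exp_coeffs q \<theta> r A (i - k)))) {k. 1 \<le> k \<and> k \<le> r \<and> k \<le> i})"
  using exp_rel_exp_coeffs assms unfolding exp_rel_iff by blast

lemma vanishes_off_finite_support_exp_coeffs:
  "vanishes_off_finite_support (exp_coeffs q \<theta> r A i)"
  by (cases "i = 0")
    (simp_all add: exp_coeffs_0 exp_coeffs_step vanishes_off_finite_support_tone
      vanishes_off_finite_support_tscale vanishes_off_finite_support_tsum_fin)

lemma F_coeffs_delta0:
  "F_coeffs q \<theta> r A (delta0 r A) = (\<lambda>i. if i = 0 then tzero else exp_coeffs q \<theta> r A i)"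
proof -
  have "tsum_fin (\<lambda>k. tmul (delta0 r A k) (tfrobn q k (exp_coeffs q \<theta> r A (i - k)))) {k. 1 \<le> k \<and> k \<le> i}
      = tsum_fin (\<lambda>k. tmul (A k) (tfrobn q k (exp_coeffs q \<theta> r A (i - k)))) {k. 1 \<le> k \<and> k \<le> r \<and> k \<le> i}"
    for i
    unfolding tsum_fin_def delta0_def
    by (intro ext sum.mono_neutral_cong_right) (auto intro: finite_subset[of _ "{..i}"])
  then show ?thesis
    by (intro ext) (simp add: F_coeffs_eq exp_coeffs_step)
qed

lemma F_coeffs_deltaj:
  assumes "1 \<le> j"
  shows "F_coeffs q \<theta> r A (deltaj j) = (\<lambda>i. if j \<le> i
     then tscale (inverse (\<theta> ^ q ^ i - \<theta>)) (tfrobn q j (exp_coeffs q \<theta> r A (i - j))) else tzero)"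
proof -
  have deltaj_term: "tmul (deltaj j k) (tfrobn q k (exp_coeffs q \<theta> r A (i - k)))
      = (if k = j then tfrobn q j (exp_coeffs q \<theta> r A (i - j)) else tzero)" for k i
    using q_ge_2
    by (cases "k = j")
      (simp_all add: deltaj_def tmul_tone vanishes_off_finite_support_tfrobn
        vanishes_off_finite_support_exp_coeffs)
  have sum_eq: "tsum_fin (\<lambda>k. tmul (deltaj j k) (tfrobn q k (exp_coeffs q \<theta> r A (i - k)))) {k. 1 \<le> k \<and> k \<le> i}
      = (if j \<le> i then tfrobn q j (exp_coeffs q \<theta> r A (i - j)) else tzero)" for i
  proof
    fix e
    have "{k. 1 \<le> k \<and> k \<le> i} = {1..i}"
      by auto
    then have "tsum_fin (\<lambda>k. tmul (deltaj j k) (tfrobn q k (exp_coeffs q \<theta> r A (i - k)))) {k. 1 \<le> k \<and> k \<le> i} e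
        = (\<Sum>k\<in>{1..i}. if k = j then tfrobn q j (exp_coeffs q \<theta> r A (i - j)) e else 0)"
      by (simp add: tsum_fin_def deltaj_term if_distrib[of "\<lambda>f. f e"] cong: if_cong)
    then show "tsum_fin (\<lambda>k. tmul (deltaj j k) (tfrobn q k (exp_coeffs q \<theta> r A (i - k)))) {k. 1 \<le> k \<and> k \<le> i} e
        = (if j \<le> i then tfrobn q j (exp_coeffs q \<theta> r A (i - j)) else tzero) e"
      using assms by simp
  qed
  show ?thesis
    unfolding F_coeffs_eq sum_eq using assms by (auto simp: fun_eq_iff tscale_def)
qed

end

section \<open>The Anderson generating function of a period\<close>

locale drinfeld_period = Cinf_field v q \<theta> for v :: "'c::field \<Rightarrow> real" and q \<theta> +
  fixes s r :: nat and A :: "nat \<Rightarrow> 'c tate" and lam :: "'c tate"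
  assumes coeffs_in_tate: "\<And>k. 1 \<le> k \<Longrightarrow> k \<le> r \<Longrightarrow> in_tate s v (A k)"
    and lam_period: "lam \<in> period_lattice s v q \<theta> r A"
begin

definition period_term :: "nat \<Rightarrow> 'c tate" where
  "period_term m = tmul (exp_coeffs q \<theta> r A m) (tfrobn q m lam)"

lemma lam_in_tate: "in_tate s v lam"
  using lam_period unfolding period_lattice_def by blast

lemma tate_sums_period_term: "tate_sums v period_term tzero"
  using lam_period unfolding period_lattice_def period_term_def[abs_def] by blast

lemma period_term_0: "period_term 0 = lam"
  by (simp add: period_term_def exp_coeffs_0 tmul_tone
      in_tate_vanishes_off_finite_support[OF lam_in_tate])

lemma uniformly_null_period_term: "uniformly_null period_term"
  by (rule tate_sums_imp_uniformly_null[OF tate_sums_period_term])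

lemma bounded_coeffs_exp_coeffs: "bounded_coeffs (exp_coeffs q \<theta> r A i)"
proof (induction i rule: less_induct)
  case (less i)
  have "finite {k. 1 \<le> k \<and> k \<le> r \<and> k \<le> i}"
    by (rule finite_subset[of _ "{..i}"]) auto
  moreover have "bounded_coeffs (A k)" if "1 \<le> k" "k \<le> r" for k
    using coeffs_in_tate[OF that] by (rule in_tate_imp_bounded_coeffs)
  ultimately show ?case
    using less
    by (cases "i = 0")
      (auto simp: exp_coeffs_0 exp_coeffs_step bounded_coeffs_tone
        intro!: bounded_coeffs_tscale bounded_coeffs_tsum_fin bounded_coeffs_tmul bounded_coeffs_tfrobn)
qed

lemma bounded_coeffs_period_term: "bounded_coeffs (period_term m)"
  unfolding period_term_def
  by (intro bounded_coeffs_tmul bounded_coeffs_exp_coeffs bounded_coeffs_tfrobn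
      in_tate_imp_bounded_coeffs[OF lam_in_tate])

lemma period_term_bound:
  obtains B where "0 \<le> B" and "\<And>m e. v (period_term m e) \<le> B"
  using uniformly_null_imp_uniform_bound[OF bounded_coeffs_period_term uniformly_null_period_term] by blast

lemma F_delta0_sums_tneg:
  "tate_sums v (\<lambda>i. tmul (F_coeffs q \<theta> r A (delta0 r A) i) (tfrobn q i lam)) (tneg lam)"
proof -
  have "(\<lambda>i. tmul (F_coeffs q \<theta> r A (delta0 r A) i) (tfrobn q i lam))
      = (\<lambda>i. if i = 0 then tzero else period_term i)"
    by (simp add: fun_eq_iff F_coeffs_delta0 period_term_def)
  moreover have "tneg lam = (\<lambda>e. tzero e - period_term 0 e)"
    by (simp add: fun_eq_iff tneg_def period_term_0)
  ultimately show ?thesis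
    using tate_sums_zero_first[OF tate_sums_period_term] by simp
qed

lemma agf_mero_terms_eq:
  "agf_mero_terms q \<theta> r A lam z n = tscale (inverse (\<theta> ^ q ^ n - z)) (period_term n)"
  by (simp add: agf_mero_terms_def period_term_def)

lemma agf_mero_sums_near_theta:
  assumes "v (z - \<theta>) \<le> 1" and "z \<noteq> \<theta>" and B: "\<And>m e. v (period_term m e) \<le> B"
  obtains S where "tate_sums v (agf_mero_terms q \<theta> r A lam z) S"
    and "\<And>e. v ((z - \<theta>) * S e - tneg lam e) \<le> v (z - \<theta>) * B"
proof -
  let ?g = "agf_mero_terms q \<theta> r A lam z"
  have g_le: "v (?g n e) \<le> v (period_term n e)" if "1 \<le> n" for n e
  proof -
    have "v (inverse (\<theta> ^ q ^ n - z)) \<le> 1"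
      using v_inverse_theta_power_diff_le_1[OF q_power_ge_2[OF that] assms(1)] .
    then show ?thesis
      by (simp add: agf_mero_terms_eq tscale_def v_mult mult_left_le_one_le v_nonneg)
  qed
  obtain S where S: "tate_sums v ?g S"
    using uniformly_null_imp_tate_sums[OF uniformly_null_dominated[OF uniformly_null_period_term g_le]]
    by blast
  have "v ((z - \<theta>) * S e - tneg lam e) \<le> v (z - \<theta>) * B" for e
  proof -
    have "vsums (\<lambda>n. ?g (n + 1) e) (S e - ?g 0 e)"
      using vsums_shift[OF tate_sums_coeff[OF S], of 1] by simp
    moreover have "v (?g (n + 1) e) \<le> B" for n
      using g_le[of "n + 1" e] B[of "n + 1" e] by simp
    ultimately have "v (S e - ?g 0 e) \<le> B"
      by (rule vsums_le)
    moreover have "(z - \<theta>) * S e - tneg lam e = (z - \<theta>) * (S e - ?g 0 e)"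
    proof -
      have "(z - \<theta>) * inverse (\<theta> - z) = - 1"
        using assms(2) by (simp add: field_simps)
      have "(z - \<theta>) * (S e - ?g 0 e) = (z - \<theta>) * S e - ((z - \<theta>) * inverse (\<theta> - z)) * lam e"
        by (simp add: agf_mero_terms_eq tscale_def period_term_0 algebra_simps)
      also have "\<dots> = (z - \<theta>) * S e - tneg lam e"
        using \<open>(z - \<theta>) * inverse (\<theta> - z) = - 1\<close> by (simp add: tneg_def)
      finally show ?thesis ..
    qed
    ultimately show ?thesis
      by (simp add: v_mult mult_left_mono v_nonneg)
  qed
  with S show ?thesis
    using that by blast
qed

lemma agf_has_residue_at_theta_tneg: "agf_has_residue_at_theta v q \<theta> r A lam (tneg lam)"
  unfolding agf_has_residue_at_theta_def
proof (intro allI impI)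
  fix \<epsilon> :: real
  assume "0 < \<epsilon>"
  obtain B where "0 \<le> B" and B: "\<And>m e. v (period_term m e) \<le> B"
    using period_term_bound by blast
  define \<delta> where "\<delta> = min 1 (\<epsilon> / (B + 1))"
  have "\<exists>S. tate_sums v (agf_mero_terms q \<theta> r A lam z) S \<and> (\<forall>e. v ((z - \<theta>) * S e - tneg lam e) < \<epsilon>)"
    if z: "0 < v (z - \<theta>) \<and> v (z - \<theta>) < \<delta>" for z
  proof -
    have "v (z - \<theta>) \<le> 1" and "z \<noteq> \<theta>"
      using z by (auto simp: \<delta>_def)
    then obtain S where S: "tate_sums v (agf_mero_terms q \<theta> r A lam z) S"
      and bound: "\<And>e. v ((z - \<theta>) * S e - tneg lam e) \<le> v (z - \<theta>) * B"
      using agf_mero_sums_near_theta B by blast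
    have "v (z - \<theta>) * (B + 1) < \<epsilon>"
      using z \<open>0 \<le> B\<close> by (simp add: \<delta>_def pos_less_divide_eq)
    then have "v (z - \<theta>) * B < \<epsilon>"
      using z by (simp add: distrib_left)
    then show ?thesis
      using S bound by (meson le_less_trans)
  qed
  moreover have "0 < \<delta>"
    using \<open>0 < \<epsilon>\<close> \<open>0 \<le> B\<close> by (simp add: \<delta>_def)
  ultimately show "\<exists>\<delta>>0. \<forall>z. 0 < v (z - \<theta>) \<and> v (z - \<theta>) < \<delta> \<longrightarrow>
      (\<exists>S. tate_sums v (agf_mero_terms q \<theta> r A lam z) S \<and> (\<forall>e. v ((z - \<theta>) * S e - tneg lam e) < \<epsilon>))"
    by blast
qed

lemma F_deltaj_terms:
  assumes "1 \<le> j"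
  shows "tmul (F_coeffs q \<theta> r A (deltaj j) i) (tfrobn q i lam)
    = (if j \<le> i then tscale (inverse (\<theta> ^ q ^ i - \<theta>)) (tfrobn q j (period_term (i - j))) else tzero)"
proof (cases "j \<le> i")
  case True
  then have "tfrobn q i lam = tfrobn q j (tfrobn q (i - j) lam)"
    by (simp add: tfrobn_tfrobn)
  with True show ?thesis
    by (simp add: F_coeffs_deltaj[OF assms] period_term_def tmul_tscale_left tfrobn_tmul)
qed (simp add: F_coeffs_deltaj[OF assms])

lemma F_deltaj_sums:
  assumes "1 \<le> j"
  shows "tate_sums v (\<lambda>i. tmul (F_coeffs q \<theta> r A (deltaj j) i) (tfrobn q i lam))
    (tau_apply v q (F_coeffs q \<theta> r A (deltaj j)) lam)"
proof -
  have "uniformly_null (\<lambda>i. tmul (F_coeffs q \<theta> r A (deltaj j) i) (tfrobn q i lam))"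
  proof (rule uniformly_null_dominated)
    show "uniformly_null (\<lambda>i. tfrobn q j (period_term (i - j)))"
      using q_ge_2 by (intro uniformly_null_tfrobn uniformly_null_shift uniformly_null_period_term) simp
    show "v (tmul (F_coeffs q \<theta> r A (deltaj j) i) (tfrobn q i lam) e) \<le> v (tfrobn q j (period_term (i - j)) e)"
      if "j \<le> i" for i e
    proof -
      have "v (inverse (\<theta> ^ q ^ i - \<theta>)) \<le> 1"
        using q_power_ge_2[of i] that assms by (intro v_inverse_theta_power_diff_le_1) simp_all
      then show ?thesis
        using that by (simp add: F_deltaj_terms[OF assms] tscale_def v_mult mult_left_le_one_le v_nonneg)
    qed
  qed
  then obtain S where "tate_sums v (\<lambda>i. tmul (F_coeffs q \<theta> r A (deltaj j) i) (tfrobn q i lam)) S"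
    using uniformly_null_imp_tate_sums by blast
  then show ?thesis
    unfolding tau_apply_def by (simp add: the_tate_sums)
qed

lemma agf_coeff_sums:
  "tate_sums v (\<lambda>m. tscale (inverse (\<theta> ^ (n + 1)) ^ q ^ m) (period_term m)) (agf_coeff v q \<theta> r A lam n)"
proof -
  let ?c = "inverse (\<theta> ^ (n + 1))"
  have terms: "tmul (exp_coeffs q \<theta> r A m) (tfrobn q m (tscale ?c lam)) = tscale (?c ^ q ^ m) (period_term m)"
    for m
    by (simp add: period_term_def tfrobn_tscale tmul_tscale_right)
  define X where "X = real q ^ (n + 1)"
  have "1 \<le> X"
    unfolding X_def using q_ge_2 by (intro one_le_power) simp
  have "v (?c ^ q ^ m) \<le> 1" for m
  proof -
    have "v (?c ^ q ^ m) = inverse X ^ q ^ m"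
      by (simp only: v_power v_inverse v_theta X_def)
    also have "\<dots> \<le> 1"
      using \<open>1 \<le> X\<close> by (intro power_le_one) (simp_all add: inverse_le_1_iff)
    finally show ?thesis .
  qed
  then have "uniformly_null (\<lambda>m. tscale (?c ^ q ^ m) (period_term m))"
    by (intro uniformly_null_dominated[OF uniformly_null_period_term, of 0])
      (simp add: tscale_def v_mult mult_left_le_one_le v_nonneg)
  then obtain E where E: "tate_sums v (\<lambda>m. tscale (?c ^ q ^ m) (period_term m)) E"
    using uniformly_null_imp_tate_sums by blast
  moreover have "agf_coeff v q \<theta> r A lam n = E"
    unfolding agf_coeff_def exp_apply_def tau_apply_def terms using the_tate_sums[OF E] .
  ultimately show ?thesis
    by simp
qed

lemma agf_twist_sums:
  assumes "1 \<le> j"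
  shows "tate_sums v (\<lambda>n. tscale (\<theta> ^ n) (tfrobn q j (agf_coeff v q \<theta> r A lam n)))
    (tau_apply v q (F_coeffs q \<theta> r A (deltaj j)) lam)"
proof -
  obtain B where "0 \<le> B" and B: "\<And>m e. v (period_term m e) \<le> B"
    using period_term_bound by blast
  define F where "F = tau_apply v q (F_coeffs q \<theta> r A (deltaj j)) lam"
  have "v (F e - (\<Sum>n<N. tscale (\<theta> ^ n) (tfrobn q j (agf_coeff v q \<theta> r A lam n)) e))
      \<le> B ^ q ^ j / real q ^ N" for N e
  proof (rule geometric_expansion_error[where Q = "\<lambda>m. q ^ (m + j)" and d = "\<lambda>m. period_term m e ^ q ^ j"])
    show "2 \<le> q ^ (m + j)" for m
      using q_power_ge_2 assms by simp
    show "v (period_term m e ^ q ^ j) \<le> B ^ q ^ j" for m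
      using B v_nonneg by (simp add: v_power power_mono)
    have "(\<Sum>i<j. tmul (F_coeffs q \<theta> r A (deltaj j) i) (tfrobn q i lam) e) = 0"
      by (simp add: F_deltaj_terms[OF assms])
    then have "vsums (\<lambda>m. tmul (F_coeffs q \<theta> r A (deltaj j) (m + j)) (tfrobn q (m + j) lam) e) (F e)"
      using vsums_shift[OF tate_sums_coeff[OF F_deltaj_sums[OF assms], of e], of j] by (simp add: F_def)
    then show "vsums (\<lambda>m. inverse (\<theta> ^ q ^ (m + j) - \<theta>) * period_term m e ^ q ^ j) (F e)"
      unfolding F_deltaj_terms[OF assms] by (simp add: tscale_def tfrobn_def)
    show "vsums (\<lambda>m. \<theta> ^ n * inverse (\<theta> ^ (n + 1)) ^ q ^ (m + j) * period_term m e ^ q ^ j)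
        (tscale (\<theta> ^ n) (tfrobn q j (agf_coeff v q \<theta> r A lam n)) e)" for n
      using vsums_cmult[OF vsums_power_q_power[OF tate_sums_coeff[OF agf_coeff_sums]], of "\<theta> ^ n"]
      by (simp add: tscale_def tfrobn_def power_mult_distrib power_add mult.assoc flip: power_mult)
  qed
  then show ?thesis
    unfolding F_def[symmetric] using q_ge_2
    by (intro tate_sums_if_error_le[where u = "\<lambda>N. B ^ q ^ j / real q ^ N"] LIMSEQ_divide_realpow_zero)
      simp_all
qed

end

theorem proposition5p7:
  fixes q s r :: nat and v :: "'c::field \<Rightarrow> real" and \<theta> :: 'c
    and A :: "nat \<Rightarrow> 'c tate" and lam :: "'c tate"
  assumes Cinf: "is_Cinf q v \<theta>"
    and rank: "r \<ge> 1"
    and coeffs: "\<forall>k. 1 \<le> k \<and> k \<le> r \<longrightarrow> in_tate s v (A k)"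
    and unit: "\<exists>B. in_tate s v B \<and> tmul (A r) B = tone"
    and lam_in: "lam \<in> period_lattice s v q \<theta> r A"
  shows "tate_sums v (\<lambda>i. tmul (F_coeffs q \<theta> r A (delta0 r A) i) (tfrobn q i lam)) (tneg lam)
       \<and> agf_has_residue_at_theta v q \<theta> r A lam (tneg lam)
       \<and> (\<forall>j. 1 \<le> j \<and> j \<le> r - 1 \<longrightarrow>
            (let Fv = tau_apply v q (F_coeffs q \<theta> r A (deltaj j)) lam in
               tate_sums v (\<lambda>i. tmul (F_coeffs q \<theta> r A (deltaj j) i) (tfrobn q i lam)) Fv
             \<and> tate_sums v (\<lambda>n. tscale (\<theta> ^ n) (tfrobn q j (agf_coeff v q \<theta> r A lam n))) Fv
             \<and> agf_twist_eval v q \<theta> r A lam j \<theta> = Fv))"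
proof -
  interpret Cinf_field v q \<theta>
    using Cinf by (rule is_Cinf_imp_Cinf_field)
  interpret drinfeld_period v q \<theta> s r A lam
    using coeffs lam_in by unfold_locales auto
  have "agf_twist_eval v q \<theta> r A lam j \<theta> = tau_apply v q (F_coeffs q \<theta> r A (deltaj j)) lam"
    if "1 \<le> j" for j
    unfolding agf_twist_eval_def using the_tate_sums[OF agf_twist_sums[OF that]] .
  then show ?thesis
    using F_delta0_sums_tneg agf_has_residue_at_theta_tneg F_deltaj_sums agf_twist_sums by (simp add: Let_def)
qed

end
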